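(* Let $G$ be a finite simple undirected graph on $n\ge1$ vertices. Then every coalition game $\mathcal G$ over $G$ satisfies $\dfrac{\rho^f(\mathcal G)}{\rho(\mathcal G)}\le 2\sqrt n$.
   Context: Coalition game over $G=(V,E)$: a valuation $v:2^V\to\mathbb Z_{\ge0}$ with $v(\emptyset)=0$, $v(S)=0$ whenever $G[S]$ is disconnected, $v$ not identically zero. $\rho^f(\mathcal G)=\max\{\sum_S v(S)y_S: y\ge0,\ \sum_{S\ni i}y_S\le1\ \forall i\in V\}$, and $\rho(\mathcal G)$ is the same maximum over $0/1$ vectors $y$ (equivalently, the maximum of $\sum v(S)$ over families of pairwise disjoint subsets of $V$). *)

theory Defs
  imports "HOL-Analysis.Analysis"
begin

definition simple_graph :: "'a set \<Rightarrow> ('a \<Rightarrow> 'a \<Rightarrow> bool) \<Rightarrow> bool" where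
  "simple_graph V E \<longleftrightarrow> finite V \<and> (\<forall>x y. E x y \<longrightarrow> E y x) \<and> (\<forall>x. \<not> E x x)
     \<and> (\<forall>x y. E x y \<longrightarrow> x \<in> V \<and> y \<in> V)"

definition induced_connected :: "('a \<Rightarrow> 'a \<Rightarrow> bool) \<Rightarrow> 'a set \<Rightarrow> bool" where
  "induced_connected E S \<longleftrightarrow> S \<noteq> {} \<and>
     (\<forall>x\<in>S. \<forall>y\<in>S. (x, y) \<in> {(a, b). a \<in> S \<and> b \<in> S \<and> E a b}\<^sup>*)"

definition coalition_game :: "'a set \<Rightarrow> ('a \<Rightarrow> 'a \<Rightarrow> bool) \<Rightarrow> ('a set \<Rightarrow> nat) \<Rightarrow> bool" where
  "coalition_game V E v \<longleftrightarrow> v {} = 0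
     \<and> (\<forall>S\<subseteq>V. \<not> induced_connected E S \<longrightarrow> v S = 0)
     \<and> (\<exists>S\<subseteq>V. v S \<noteq> 0)"

definition frac_feasible :: "'a set \<Rightarrow> ('a set \<Rightarrow> real) \<Rightarrow> bool" where
  "frac_feasible V y \<longleftrightarrow> (\<forall>S\<subseteq>V. y S \<ge> 0)
     \<and> (\<forall>i\<in>V. (\<Sum>S\<in>{S\<in>Pow V. i \<in> S}. y S) \<le> 1)"

definition rho_f :: "'a set \<Rightarrow> ('a set \<Rightarrow> nat) \<Rightarrow> real" where
  "rho_f V v = Sup {(\<Sum>S\<in>Pow V. real (v S) * y S) | y. frac_feasible V y}"

definition rho :: "'a set \<Rightarrow> ('a set \<Rightarrow> nat) \<Rightarrow> nat" where
  "rho V v = Max {(\<Sum>S\<in>F. v S) | F. F \<subseteq> Pow V \<and> pairwise disjnt F}"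

end

theory Submission
  imports Defs
begin

text \<open>Put \<open>n = |V|\<close>, \<open>s = \<surd>n\<close>, \<open>\<rho> = rho V v\<close>, and let \<open>y\<close> be a feasible
  fractional packing. Sets with more than \<open>s\<close> vertices carry total weight less than
  \<open>n / s = s\<close>, because every vertex is covered at most once; each of them is worth at most
  \<open>\<rho>\<close>, so they contribute at most \<open>s \<rho>\<close>. Among the small sets, a greedy choice of a
  most valuable set \<open>S\<^sub>0\<close> pays for all sets meeting \<open>S\<^sub>0\<close> up to the factor
  \<open>|S\<^sub>0| \<le> s\<close>; iterating on the sets disjoint from \<open>S\<^sub>0\<close> yields a disjoint family
  whose value, times \<open>s\<close>, dominates the small part, so the small sets contribute at most
  \<open>s \<rho>\<close> as well.\<close>

definition fractional_packing :: "'a set set \<Rightarrow> ('a set \<Rightarrow> real) \<Rightarrow> bool" where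
  "fractional_packing C y \<longleftrightarrow>
     (\<forall>T\<in>C. 0 \<le> y T) \<and> (\<forall>i. (\<Sum>T\<in>{T\<in>C. i \<in> T}. y T) \<le> 1)"

lemma fractional_packing_subset:
  assumes "fractional_packing C y" "finite C" "D \<subseteq> C"
  shows "fractional_packing D y"
  unfolding fractional_packing_def
proof safe
  fix i
  have "(\<Sum>T\<in>{T\<in>D. i \<in> T}. y T) \<le> (\<Sum>T\<in>{T\<in>C. i \<in> T}. y T)"
    using assms by (intro sum_mono2) (auto simp: fractional_packing_def)
  also have "\<dots> \<le> 1"
    using assms(1) by (simp add: fractional_packing_def)
  finally show "(\<Sum>T\<in>{T\<in>D. i \<in> T}. y T) \<le> 1" .
qed (use assms in \<open>auto simp: fractional_packing_def\<close>)

lemma frac_feasible_imp_fractional_packing: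
  assumes "frac_feasible V y"
  shows "fractional_packing (Pow V) y"
  unfolding fractional_packing_def
proof safe
  fix i
  show "(\<Sum>T\<in>{T\<in>Pow V. i \<in> T}. y T) \<le> 1"
  proof (cases "i \<in> V")
    case False
    then have no_sets: "{T\<in>Pow V. i \<in> T} = {}"
      by auto
    show ?thesis
      unfolding no_sets by simp
  qed (use assms in \<open>simp add: frac_feasible_def\<close>)
qed (use assms in \<open>simp add: frac_feasible_def\<close>)

lemma fractional_packing_sum_card_Int_le:
  assumes "fractional_packing C y" "finite C" "finite A"
  shows "(\<Sum>T\<in>C. real (card (A \<inter> T)) * y T) \<le> real (card A)"
proof -
  have "(\<Sum>T\<in>C. real (card (A \<inter> T)) * y T) = (\<Sum>T\<in>C. \<Sum>i\<in>A. if i \<in> T then y T else 0)"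
    using assms(3) by (simp add: sum.If_cases Int_def)
  also have "\<dots> = (\<Sum>i\<in>A. \<Sum>T\<in>{T\<in>C. i \<in> T}. y T)"
    using assms(2) by (subst sum.swap) (simp add: sum.inter_filter)
  also have "\<dots> \<le> (\<Sum>i\<in>A. 1)"
    using assms(1) by (intro sum_mono) (simp add: fractional_packing_def)
  finally show ?thesis by simp
qed

lemma fractional_packing_meeting_le_card:
  assumes "fractional_packing C y" "finite C" "finite A" "\<forall>T\<in>C. A \<inter> T \<noteq> {}"
  shows "(\<Sum>T\<in>C. y T) \<le> real (card A)"
proof -
  have "y T \<le> real (card (A \<inter> T)) * y T" if "T \<in> C" for T
  proof -
    have "1 \<le> card (A \<inter> T)"
      using assms(3,4) that by (simp add: Suc_le_eq card_gt_0_iff)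
    then show ?thesis
      using assms(1) that mult_right_mono[of 1 "real (card (A \<inter> T))" "y T"]
      by (simp add: fractional_packing_def)
  qed
  then have "(\<Sum>T\<in>C. y T) \<le> (\<Sum>T\<in>C. real (card (A \<inter> T)) * y T)"
    by (rule sum_mono)
  also have "\<dots> \<le> real (card A)"
    using assms(1-3) by (rule fractional_packing_sum_card_Int_le)
  finally show ?thesis .
qed

lemma fractional_packing_meeting_value_le:
  fixes v :: "'a set \<Rightarrow> real"
  assumes "fractional_packing C y" "finite C" "finite A" "\<forall>T\<in>C. A \<inter> T \<noteq> {}"
    and "real (card A) \<le> s" "\<forall>T\<in>C. v T \<le> m" "0 \<le> m"
  shows "(\<Sum>T\<in>C. v T * y T) \<le> s * m"
proof -
  have "(\<Sum>T\<in>C. v T * y T) \<le> (\<Sum>T\<in>C. m * y T)"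
    using assms(1,6) by (intro sum_mono mult_right_mono) (auto simp: fractional_packing_def)
  also have "\<dots> = m * (\<Sum>T\<in>C. y T)"
    by (simp add: sum_distrib_left)
  also have "\<dots> \<le> m * s"
    using fractional_packing_meeting_le_card[OF assms(1-4)] assms(5,7)
    by (intro mult_left_mono) auto
  finally show ?thesis
    by (simp add: mult.commute)
qed

lemma fractional_packing_large_sets_le:
  fixes v :: "'a set \<Rightarrow> real"
  assumes "fractional_packing C y" "finite A" "C \<subseteq> Pow A" "0 < s"
    and "\<forall>S\<in>C. s \<le> real (card S)" "\<forall>S\<in>C. v S \<le> r" "0 \<le> r"
  shows "(\<Sum>S\<in>C. v S * y S) \<le> r * real (card A) / s"
proof -
  have fin: "finite C"
    using finite_subset[OF assms(3)] assms(2) by simp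
  have "v S * y S \<le> r / s * (real (card (A \<inter> S)) * y S)" if "S \<in> C" for S
  proof -
    have "0 \<le> y S" "A \<inter> S = S"
      using assms(1,3) that by (auto simp: fractional_packing_def)
    have "r * s \<le> r * real (card S)"
      using assms(5,7) that by (intro mult_left_mono) auto
    then have "r \<le> r / s * real (card S)"
      using assms(4) by (simp add: field_simps)
    then have "v S * y S \<le> r / s * real (card S) * y S"
      using assms(6) that \<open>0 \<le> y S\<close> by (meson mult_right_mono order.trans)
    then show ?thesis
      using \<open>A \<inter> S = S\<close> by (simp add: mult.assoc)
  qed
  then have "(\<Sum>S\<in>C. v S * y S) \<le> r / s * (\<Sum>S\<in>C. real (card (A \<inter> S)) * y S)"
    by (simp add: sum_distrib_left sum_mono)
  also have "\<dots> \<le> r / s * real (card A)"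
    using assms(4,7) fractional_packing_sum_card_Int_le[OF assms(1) fin assms(2)]
    by (intro mult_left_mono) auto
  finally show ?thesis by simp
qed

lemma greedy_disjoint_subfamily:
  fixes v :: "'a set \<Rightarrow> real"
  assumes "fractional_packing C y" "finite C"
    and "\<forall>S\<in>C. S \<noteq> {} \<and> finite S \<and> real (card S) \<le> s" "\<forall>S\<in>C. 0 \<le> v S"
  shows "\<exists>F\<subseteq>C. pairwise disjnt F \<and> (\<Sum>S\<in>C. v S * y S) \<le> s * (\<Sum>S\<in>F. v S)"
  using assms
proof (induction "card C" arbitrary: C rule: less_induct)
  case less
  show ?case
  proof (cases "C = {}")
    case False
    have "Max (v ` C) \<in> v ` C"
      using less.prems(2) False by simp
    then obtain S0 where "S0 \<in> C" "v S0 = Max (v ` C)"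
      by auto
    then have S0_max: "\<forall>T\<in>C. v T \<le> v S0"
      using less.prems(2) by simp
    define C' where "C' = {T\<in>C. disjnt S0 T}"
    define D where "D = C - C'"
    have "S0 \<notin> C'"
      using less.prems(3) \<open>S0 \<in> C\<close> by (auto simp: C'_def disjnt_def)
    moreover have "C' \<subseteq> C"
      by (simp add: C'_def)
    ultimately have "C' \<subset> C"
      using \<open>S0 \<in> C\<close> by blast
    then have "finite C'" "card C' < card C"
      using less.prems(2) by (auto intro: finite_subset psubset_card_mono)
    moreover have "fractional_packing C' y"
      using less.prems(1,2) \<open>C' \<subset> C\<close> by (blast intro: fractional_packing_subset)
    ultimately obtain F' where F': "F' \<subseteq> C'" "pairwise disjnt F'"
      "(\<Sum>S\<in>C'. v S * y S) \<le> s * (\<Sum>S\<in>F'. v S)"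
      using less.hyps[of C'] less.prems(3,4) \<open>C' \<subset> C\<close> by blast
    have "(\<Sum>S\<in>D. v S * y S) \<le> s * v S0"
    proof (rule fractional_packing_meeting_value_le[where A = S0])
      show "fractional_packing D y"
        using less.prems(1,2) by (rule fractional_packing_subset) (simp add: D_def)
      show "\<forall>T\<in>D. S0 \<inter> T \<noteq> {}"
        by (auto simp: D_def C'_def disjnt_def)
    qed (use less.prems S0_max \<open>S0 \<in> C\<close> in \<open>auto simp: D_def\<close>)
    moreover have "(\<Sum>S\<in>C. v S * y S) = (\<Sum>S\<in>D. v S * y S) + (\<Sum>S\<in>C'. v S * y S)"
      unfolding D_def using \<open>C' \<subset> C\<close> less.prems(2) by (intro sum.subset_diff) auto
    moreover have "(\<Sum>S\<in>insert S0 F'. v S) = v S0 + (\<Sum>S\<in>F'. v S)"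
      using F'(1) \<open>S0 \<notin> C'\<close> \<open>finite C'\<close> by (subst sum.insert) (auto intro: finite_subset)
    ultimately have "(\<Sum>S\<in>C. v S * y S) \<le> s * (\<Sum>S\<in>insert S0 F'. v S)"
      using F'(3) by (simp add: distrib_left)
    moreover have "pairwise disjnt (insert S0 F')"
      using F'(1,2) unfolding C'_def by (auto simp: pairwise_insert disjnt_sym)
    moreover have "insert S0 F' \<subseteq> C"
      using F'(1) \<open>S0 \<in> C\<close> \<open>C' \<subset> C\<close> by blast
    ultimately show ?thesis
      by blast
  qed (intro exI[of _ "{}"], simp)
qed

lemma sum_disjoint_family_le_rho:
  assumes "finite V" "F \<subseteq> Pow V" "pairwise disjnt F"
  shows "(\<Sum>S\<in>F. v S) \<le> rho V v"
  unfolding rho_def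
proof (rule Max_ge)
  have "{(\<Sum>S\<in>F. v S) | F. F \<subseteq> Pow V \<and> pairwise disjnt F} \<subseteq> (\<lambda>F. \<Sum>S\<in>F. v S) ` Pow (Pow V)"
    by blast
  then show "finite {(\<Sum>S\<in>F. v S) | F. F \<subseteq> Pow V \<and> pairwise disjnt F}"
    using assms(1) by (simp add: finite_subset)
qed (use assms in blast)

lemma value_le_rho:
  assumes "finite V" "S \<subseteq> V"
  shows "v S \<le> rho V v"
  using sum_disjoint_family_le_rho[of V "{S}" v] assms by simp

lemma frac_objective_le_rho:
  assumes "finite V" "V \<noteq> {}" "v {} = 0" "frac_feasible V y"
  shows "(\<Sum>S\<in>Pow V. real (v S) * y S) \<le> 2 * sqrt (real (card V)) * rho V v"
proof -
  define s where "s = sqrt (real (card V))"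
  define small where "small = {S\<in>Pow V. S \<noteq> {} \<and> real (card S) \<le> s}"
  define large where "large = {S\<in>Pow V. s < real (card S)}"
  have s_pos: "0 < s"
    using assms(1,2) by (simp add: s_def card_gt_0_iff)
  have "finite (Pow V)"
    using assms(1) by simp
  have packing: "fractional_packing (Pow V) y"
    using assms(4) by (rule frac_feasible_imp_fractional_packing)
  have "(\<Sum>S\<in>Pow V. real (v S) * y S) = (\<Sum>S\<in>small \<union> large. real (v S) * y S)"
    using \<open>finite (Pow V)\<close> assms(3)
    by (intro sum.mono_neutral_right) (auto simp: small_def large_def)
  also have "\<dots> = (\<Sum>S\<in>small. real (v S) * y S) + (\<Sum>S\<in>large. real (v S) * y S)"
    using \<open>finite (Pow V)\<close>
    by (intro sum.union_disjoint) (auto simp: small_def large_def intro: finite_subset)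
  also have "(\<Sum>S\<in>small. real (v S) * y S) \<le> s * rho V v"
  proof -
    have "finite small" "fractional_packing small y"
      using \<open>finite (Pow V)\<close> packing
      by (auto simp: small_def intro: finite_subset fractional_packing_subset)
    moreover have "\<forall>S\<in>small. S \<noteq> {} \<and> finite S \<and> real (card S) \<le> s"
      by (auto simp: small_def intro: rev_finite_subset[OF assms(1)])
    ultimately obtain F where F: "F \<subseteq> small" "pairwise disjnt F"
      "(\<Sum>S\<in>small. real (v S) * y S) \<le> s * (\<Sum>S\<in>F. real (v S))"
      using greedy_disjoint_subfamily[of small y s "\<lambda>S. real (v S)"] by auto
    have "(\<Sum>S\<in>F. v S) \<le> rho V v"
      using assms(1) F(1,2) by (intro sum_disjoint_family_le_rho) (auto simp: small_def)
    then have "s * (\<Sum>S\<in>F. real (v S)) \<le> s * rho V v"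
      using s_pos by (simp flip: of_nat_sum)
    then show ?thesis
      using F(3) by linarith
  qed
  also have "(\<Sum>S\<in>large. real (v S) * y S) \<le> rho V v * real (card V) / s"
  proof (rule fractional_packing_large_sets_le[OF _ assms(1) _ s_pos])
    show "fractional_packing large y"
      using packing \<open>finite (Pow V)\<close>
      by (rule fractional_packing_subset) (auto simp: large_def)
  qed (use value_le_rho[OF assms(1)] in \<open>auto simp: large_def\<close>)
  also have "rho V v * real (card V) / s = s * rho V v"
    using s_pos by (simp add: s_def field_simps)
  finally show ?thesis
    by (simp add: s_def algebra_simps)
qed

theorem lemma5p4:
  fixes V :: "'a set" and E :: "'a \<Rightarrow> 'a \<Rightarrow> bool" and v :: "'a set \<Rightarrow> nat"
  assumes "simple_graph V E" and "card V \<ge> 1" and "coalition_game V E v"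
  shows "rho_f V v / real (rho V v) \<le> 2 * sqrt (real (card V))"
proof -
  have "finite V" "V \<noteq> {}"
    using assms(1,2) by (auto simp: simple_graph_def)
  obtain S where "S \<subseteq> V" "v S \<noteq> 0" and "v {} = 0"
    using assms(3) by (auto simp: coalition_game_def)
  then have rho_pos: "0 < rho V v"
    using value_le_rho[OF \<open>finite V\<close>, of S v] by linarith
  have "frac_feasible V (\<lambda>_. 0)"
    by (simp add: frac_feasible_def)
  then have "rho_f V v \<le> 2 * sqrt (real (card V)) * rho V v"
    unfolding rho_f_def using frac_objective_le_rho[of V v] \<open>V \<noteq> {}\<close> \<open>v {} = 0\<close> \<open>finite V\<close>
    by (intro cSup_least) auto
  then show ?thesis
    using rho_pos by (simp add: pos_divide_le_eq)
qed

end
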